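(* Under the standing assumptions of the context, for every integer $\ell\ge1$ the limit $C_\ell(x,\infty,1/2)=\lim_{n\to\infty}C_\ell(x,n,1/2)$ exists and \[ C_\ell(x,\infty,1/2)=\sum_{l=\ell}^\infty(l-\ell+1)\,d(\mathcal K_l)>0 . \]
   Context: Standing assumptions: $A=\{0,1\}$, $\Sigma=A^{\mathbb N_0}$ with metric $\rho(y,z)=2^{-\min\{i\ge0:\,y_i\ne z_i\}}$ ($y\ne z$) and shift $\sigma$. $\zeta:A\to A^*$ is a binary substitution of constant length $q\ge2$, primitive, aperiodic (its subshift $X_\zeta$ contains a non-$\sigma$-periodic sequence), with $\zeta(0)$ starting with $0$; $x=\lim_k\zeta^k(0)$ its fixed point starting with $0$. Correlation sum: $C_\ell(x,n,\varepsilon)=n^{-2}\#\{(i,j)\in[0,n)^2:\max_{0\le k<\ell}\rho(\sigma^{i+k}x,\sigma^{j+k}x)\le\varepsilon\}$. The recurrence plot $R(x,\infty,1/2)$ has indices $i,j\in\mathbb N_0$ and entry $1$ iff $x_i=x_j$; an inner line of length $l$ in it is $(i,j,l)$ with $i,j\ge1$, $i\ne j$, $x_{i+k}=x_{j+k}$ for $0\le k<l$, $x_{i-1}\ne x_{j-1}$ and $x_{i+l}\ne x_{j+l}$. $\mathcal K_l$ is the set of starting points $(i,j)\in\mathbb N^2$ of inner lines of length $l$; $d(M)=\lim_n n^{-2}\#(M\cap[0,n)^2)$, known to exist for $M=\mathcal K_l$. *)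

theory Defs
  imports "HOL-Analysis.Analysis"
begin

(* Alphabet A = {0,1} is represented by bool: False = 0, True = 1. *)

definition subst_word :: "(bool \<Rightarrow> bool list) \<Rightarrow> bool list \<Rightarrow> bool list" where
  "subst_word \<zeta> w = concat (map \<zeta> w)"

definition subst_iter :: "(bool \<Rightarrow> bool list) \<Rightarrow> nat \<Rightarrow> bool \<Rightarrow> bool list" where
  "subst_iter \<zeta> k a = (subst_word \<zeta> ^^ k) [a]"

definition constant_length :: "(bool \<Rightarrow> bool list) \<Rightarrow> nat \<Rightarrow> bool" where
  "constant_length \<zeta> q \<longleftrightarrow> (\<forall>a. length (\<zeta> a) = q)"

definition primitive_subst :: "(bool \<Rightarrow> bool list) \<Rightarrow> bool" where
  "primitive_subst \<zeta> \<longleftrightarrow> (\<exists>k\<ge>1. \<forall>a b. b \<in> set (subst_iter \<zeta> k a))"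

definition subst_language :: "(bool \<Rightarrow> bool list) \<Rightarrow> bool list set" where
  "subst_language \<zeta> = {w. \<exists>k a u v. subst_iter \<zeta> k a = u @ w @ v}"

definition factor :: "(nat \<Rightarrow> bool) \<Rightarrow> nat \<Rightarrow> nat \<Rightarrow> bool list" where
  "factor y i m = map (\<lambda>k. y (i + k)) [0..<m]"

definition subshift :: "(bool \<Rightarrow> bool list) \<Rightarrow> (nat \<Rightarrow> bool) set" where
  "subshift \<zeta> = {y. \<forall>i m. factor y i m \<in> subst_language \<zeta>}"

definition shift :: "(nat \<Rightarrow> bool) \<Rightarrow> nat \<Rightarrow> bool" where
  "shift y = (\<lambda>i. y (Suc i))"

definition shift_periodic :: "(nat \<Rightarrow> bool) \<Rightarrow> bool" where
  "shift_periodic y \<longleftrightarrow> (\<exists>p\<ge>1. (shift ^^ p) y = y)"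

definition aperiodic_subst :: "(bool \<Rightarrow> bool list) \<Rightarrow> bool" where
  "aperiodic_subst \<zeta> \<longleftrightarrow> (\<exists>y\<in>subshift \<zeta>. \<not> shift_periodic y)"

definition rho :: "(nat \<Rightarrow> bool) \<Rightarrow> (nat \<Rightarrow> bool) \<Rightarrow> real" where
  "rho y z = (if y = z then 0 else (1/2) ^ (LEAST i. y i \<noteq> z i))"

definition corr_sum :: "nat \<Rightarrow> (nat \<Rightarrow> bool) \<Rightarrow> nat \<Rightarrow> real \<Rightarrow> real" where
  "corr_sum L x n eps =
     real (card {(i,j) \<in> {0..<n} \<times> {0..<n}.
        Max ((\<lambda>k. rho ((shift ^^ (i + k)) x) ((shift ^^ (j + k)) x)) ` {0..<L}) \<le> eps})
     / (real n)^2"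

definition inner_line_starts :: "(nat \<Rightarrow> bool) \<Rightarrow> nat \<Rightarrow> (nat \<times> nat) set" where
  "inner_line_starts x l = {(i,j). i \<ge> 1 \<and> j \<ge> 1 \<and> i \<noteq> j \<and>
      (\<forall>k<l. x (i + k) = x (j + k)) \<and> x (i - 1) \<noteq> x (j - 1) \<and> x (i + l) \<noteq> x (j + l)}"

definition density :: "(nat \<times> nat) set \<Rightarrow> real" where
  "density M = lim (\<lambda>n. real (card (M \<inter> ({0..<n} \<times> {0..<n}))) / (real n)^2)"

end

theory Submission
  imports Defs
begin

text \<open>Let \<open>P\<^sub>m\<close> be the density of the pairs \<open>(i, j)\<close> at which the words of length \<open>m\<close>
  in \<open>x\<close> agree; \<open>C\<^sub>\<ell>(x, n, 1/2)\<close> is the proportion of such pairs in \<open>[0, n)\<^sup>2\<close> for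
  \<open>m = \<ell>\<close>. Grouping the pairs by the common word gives \<open>P\<^sub>m = \<Sum>\<^bsub>|w| = m\<^esub> freq(w)\<^sup>2\<close>, so
  \<open>P\<^sub>m\<close> exists as soon as every word has a frequency, and \<open>P\<^sub>m \<ge> 2\<^sup>-\<^sup>m\<close> by Cauchy--Schwarz.
  Frequencies exist because the numbers of occurrences of \<open>w\<close> in the level-\<open>k\<close> blocks \<open>\<zeta>\<^sup>k(a)\<close>,
  divided by \<open>q\<^sup>k\<close>, lie between a lower and an upper sequence whose gap shrinks by the factor
  \<open>1 - 2 q\<^sup>-\<^sup>p\<close> every \<open>p\<close> levels, \<open>p\<close> being a primitivity exponent.

  An inner line of length \<open>l\<close> at \<open>(i + 1, j + 1)\<close> is a match of length \<open>l\<close> that extends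
  neither way, so by inclusion--exclusion \<open>d(K\<^sub>l) = P\<^sub>l - 2 P\<^sub>l\<^sub>+\<^sub>1 + P\<^sub>l\<^sub>+\<^sub>2\<close>, and summation
  by parts turns \<open>\<Sum> (l - \<ell> + 1) d(K\<^sub>l)\<close> into \<open>P\<^sub>\<ell>\<close> minus the limit of
  \<open>P\<^sub>N + N (P\<^sub>N - P\<^sub>N\<^sub>+\<^sub>1)\<close>. Aperiodicity and uniform recurrence force long matches to be far
  apart, whence \<open>P\<^sub>N \<rightarrow> 0\<close>; convexity of \<open>P\<close> then gives \<open>N (P\<^sub>N - P\<^sub>N\<^sub>+\<^sub>1) \<rightarrow> 0\<close>.\<close>

lemma subst_word_funpow:
  "(subst_word \<zeta> ^^ k) ws = concat (map (subst_iter \<zeta> k) ws)"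
proof (induction k arbitrary: ws)
  case 0
  then show ?case by (induct ws) (simp_all add: subst_iter_def)
next
  case (Suc k)
  have iter_Suc: "subst_iter \<zeta> (Suc k) a = subst_word \<zeta> (subst_iter \<zeta> k a)" for a
    by (simp add: subst_iter_def)
  have "(subst_word \<zeta> ^^ Suc k) ws = subst_word \<zeta> (concat (map (subst_iter \<zeta> k) ws))"
    by (simp add: Suc)
  also have "\<dots> = concat (map (subst_iter \<zeta> (Suc k)) ws)"
    unfolding iter_Suc by (induct ws) (simp_all add: subst_word_def)
  finally show ?case .
qed

lemma subst_iter_add:
  "subst_iter \<zeta> (j + k) b = concat (map (subst_iter \<zeta> k) (subst_iter \<zeta> j b))"
proof -
  have "subst_iter \<zeta> (j + k) b = (subst_word \<zeta> ^^ k) (subst_iter \<zeta> j b)"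
    unfolding subst_iter_def by (simp add: add.commute[of j k] funpow_add)
  then show ?thesis by (simp add: subst_word_funpow)
qed

lemma length_subst_iter:
  assumes "constant_length \<zeta> q"
  shows "length (subst_iter \<zeta> k b) = q ^ k"
proof (induction k arbitrary: b)
  case 0
  then show ?case by (simp add: subst_iter_def)
next
  case (Suc k)
  have "subst_iter \<zeta> (1 + k) b = concat (map (subst_iter \<zeta> k) (\<zeta> b))"
    using subst_iter_add[of \<zeta> 1 k b] by (simp add: subst_iter_def subst_word_def)
  then have "length (subst_iter \<zeta> (Suc k) b) = (\<Sum>a\<leftarrow>\<zeta> b. q ^ k)"
    by (simp add: length_concat o_def Suc)
  also have "\<dots> = q * q ^ k"
    using assms by (simp add: sum_list_triv constant_length_def)
  finally show ?case by simp
qed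

lemma nth_concat_map_const_length:
  assumes "\<forall>a\<in>set xs. length (f a) = B" and "i < length xs" and "r < B"
  shows "concat (map f xs) ! (B * i + r) = f (xs ! i) ! r"
  using assms
proof (induction xs arbitrary: i)
  case Nil
  then show ?case by simp
next
  case (Cons a xs)
  show ?case
  proof (cases i)
    case 0
    then show ?thesis using Cons.prems by (simp add: nth_append)
  next
    case (Suc i')
    have "concat (map f (a # xs)) ! (B * i + r) = (f a @ concat (map f xs)) ! (length (f a) + (B * i' + r))"
      using Cons.prems Suc by (simp add: add.assoc)
    also have "\<dots> = f (xs ! i') ! r"
      unfolding nth_append_length_plus using Cons Suc by simp
    finally show ?thesis using Suc by simp
  qed
qed

definition window_count :: "(nat \<Rightarrow> bool) \<Rightarrow> nat \<Rightarrow> nat \<Rightarrow> nat \<Rightarrow> nat" where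
  "window_count P m a L = card {r. r < L \<and> r + m \<le> L \<and> P (a + r)}"

lemma window_count_append:
  "window_count P m a L1 + window_count P m (a + L1) L2 \<le> window_count P m a (L1 + L2)"
  "window_count P m a (L1 + L2) \<le> window_count P m a L1 + window_count P m (a + L1) L2 + m"
proof -
  define S where "S = {r. r < L1 + L2 \<and> r + m \<le> L1 + L2 \<and> P (a + r)}"
  define A where "A = {r. r < L1 \<and> r + m \<le> L1 \<and> P (a + r)}"
  define B where "B = {r. r < L2 \<and> r + m \<le> L2 \<and> P (a + L1 + r)}"
  define B' where "B' = (\<lambda>r. L1 + r) ` B"
  have fin: "finite A" "finite B'" "finite S" by (auto simp: A_def B_def B'_def S_def)
  have card_B': "card B' = card B" unfolding B'_def by (rule card_image) (auto simp: inj_on_def)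
  have "card A + card B' = card (A \<union> B')"
    using fin by (intro card_Un_disjoint[symmetric]) (auto simp: A_def B'_def)
  also have "\<dots> \<le> card S"
    using fin by (intro card_mono) (auto simp: A_def B'_def B_def S_def add.assoc)
  finally show "window_count P m a L1 + window_count P m (a + L1) L2 \<le> window_count P m a (L1 + L2)"
    using card_B' by (simp add: window_count_def A_def B_def S_def)
  have "S \<subseteq> A \<union> B' \<union> {L1 - m..<L1}"
  proof
    fix r assume r: "r \<in> S"
    show "r \<in> A \<union> B' \<union> {L1 - m..<L1}"
    proof (cases "r < L1")
      case True
      then show ?thesis using r by (cases "r + m \<le> L1") (auto simp: A_def S_def)
    next
      case False
      then have "r - L1 \<in> B" using r by (auto simp: B_def S_def)
      then have "L1 + (r - L1) \<in> B'" unfolding B'_def by blast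
      then show ?thesis using False by simp
    qed
  qed
  then have "card S \<le> card (A \<union> B' \<union> {L1 - m..<L1})" using fin by (intro card_mono) auto
  also have "\<dots> \<le> card A + card B' + card {L1 - m..<L1}"
    by (meson card_Un_le le_trans add_le_mono1)
  also have "card {L1 - m..<L1} \<le> m" by simp
  finally show "window_count P m a (L1 + L2) \<le> window_count P m a L1 + window_count P m (a + L1) L2 + m"
    using card_B' by (simp add: window_count_def A_def B_def S_def)
qed

lemma window_count_mono: "L1 \<le> L \<Longrightarrow> window_count P m a L1 \<le> window_count P m a L"
  using window_count_append(1)[of P m a L1 "L - L1"] by simp

lemma window_count_le: "window_count P m a L \<le> L"
  using card_mono[of "{..<L}" "{r. r < L \<and> r + m \<le> L \<and> P (a + r)}"]
  by (auto simp: window_count_def)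

lemma window_count_blocks:
  "(\<Sum>j<t. window_count P m (a + j * L) L) \<le> window_count P m a (t * L)"
  "window_count P m a (t * L) \<le> (\<Sum>j<t. window_count P m (a + j * L) L) + t * m"
proof (induction t)
  case 0
  { case 1 show ?case by simp }
  { case 2 show ?case by (simp add: window_count_def) }
next
  case (Suc t)
  have e: "Suc t * L = t * L + L" by simp
  { case 1 show ?case using Suc.IH(1) window_count_append(1)[of P m a "t * L" L] unfolding e by simp }
  { case 2 show ?case using Suc.IH(2) window_count_append(2)[of P m a "t * L" L] unfolding e by simp }
qed

lemma window_count_card_bounds:
  "window_count P m 0 n \<le> card {i. i < n \<and> P i}"
  "card {i. i < n \<and> P i} \<le> window_count P m 0 n + m"
proof -
  show "window_count P m 0 n \<le> card {i. i < n \<and> P i}"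
    unfolding window_count_def by (intro card_mono) auto
  have "card {i. i < n \<and> P i} \<le> card ({r. r < n \<and> r + m \<le> n \<and> P (0 + r)} \<union> {n - m..<n})"
    by (intro card_mono) auto
  also have "\<dots> \<le> card {r. r < n \<and> r + m \<le> n \<and> P (0 + r)} + card {n - m..<n}" by (rule card_Un_le)
  finally show "card {i. i < n \<and> P i} \<le> window_count P m 0 n + m" unfolding window_count_def by simp
qed

lemma sum_le_one_term_plus_bound:
  fixes f :: "'a \<Rightarrow> nat"
  assumes "finite A" "s0 \<in> A" "\<And>s. s \<in> A \<Longrightarrow> f s \<le> H"
  shows "sum f A \<le> f s0 + (card A - 1) * H"
  using assms sum_bounded_above[of "A - {s0}" f H] by (simp add: sum.remove)

lemma one_term_plus_bound_le_sum:
  fixes f :: "'a \<Rightarrow> nat"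
  assumes "finite A" "s0 \<in> A" "\<And>s. s \<in> A \<Longrightarrow> H \<le> f s"
  shows "f s0 + (card A - 1) * H \<le> sum f A"
  using assms sum_bounded_below[of "A - {s0}" H f] by (simp add: sum.remove)

definition pair_count :: "(nat \<Rightarrow> nat \<Rightarrow> bool) \<Rightarrow> nat \<Rightarrow> real" where
  "pair_count R n = (\<Sum>i<n. \<Sum>j<n. of_bool (R i j))"

lemma pair_count_nonneg: "0 \<le> pair_count R n"
  unfolding pair_count_def by (intro sum_nonneg) auto

lemma pair_count_mono: "(\<And>i j. R i j \<Longrightarrow> R' i j) \<Longrightarrow> pair_count R n \<le> pair_count R' n"
  unfolding pair_count_def by (intro sum_mono) auto

lemma card_Int_square_eq_pair_count:
  "real (card (A \<inter> {0..<n} \<times> {0..<n})) = pair_count (\<lambda>i j. (i, j) \<in> A) n"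
proof -
  have "pair_count (\<lambda>i j. (i, j) \<in> A) n = (\<Sum>p\<in>{..<n} \<times> {..<n}. of_bool (p \<in> A))"
    unfolding pair_count_def sum.cartesian_product by (simp add: case_prod_beta)
  also have "\<dots> = real (card (({..<n} \<times> {..<n}) \<inter> {p. p \<in> A}))"
    by (intro sum_of_bool_eq finite_cartesian_product finite_lessThan)
  finally show ?thesis by (simp add: atLeast0LessThan Int_commute)
qed

lemma sum_of_bool_le_card: "(\<Sum>i<n. of_bool (P i) :: real) \<le> real n"
  using sum_bounded_above[of "{..<n}" "\<lambda>i. of_bool (P i) :: real" 1] by simp

lemma pair_count_Suc:
  "pair_count R (Suc n) = pair_count R n + (\<Sum>j<Suc n. of_bool (R n j)) + (\<Sum>i<n. of_bool (R i n))"
  unfolding pair_count_def by (simp add: sum.distrib)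

lemma pair_count_Suc_shift:
  "pair_count R (Suc n) = pair_count (\<lambda>i j. R (Suc i) (Suc j)) n
     + (\<Sum>j<Suc n. of_bool (R 0 j)) + (\<Sum>i<n. of_bool (R (Suc i) 0))"
  unfolding pair_count_def by (simp only: sum.lessThan_Suc_shift sum.distrib)

lemma pair_count_Suc_bounds:
  "pair_count R n \<le> pair_count R (Suc n)"
  "pair_count R (Suc n) \<le> pair_count R n + 2 * real n + 1"
  using sum_of_bool_le_card[where n = "Suc n" and P = "R n"] sum_of_bool_le_card[where n = n and P = "\<lambda>i. R i n"]
    sum_nonneg[of "{..<Suc n}" "\<lambda>j. of_bool (R n j) :: real"] sum_nonneg[of "{..<n}" "\<lambda>i. of_bool (R i n) :: real"]
  unfolding pair_count_Suc by auto

lemma pair_count_Suc_shift_bounds: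
  "pair_count (\<lambda>i j. R (Suc i) (Suc j)) n \<le> pair_count R (Suc n)"
  "pair_count R (Suc n) \<le> pair_count (\<lambda>i j. R (Suc i) (Suc j)) n + 2 * real n + 1"
  using sum_of_bool_le_card[where n = "Suc n" and P = "R 0"] sum_of_bool_le_card[where n = n and P = "\<lambda>i. R (Suc i) 0"]
    sum_nonneg[of "{..<Suc n}" "\<lambda>j. of_bool (R 0 j) :: real"] sum_nonneg[of "{..<n}" "\<lambda>i. of_bool (R (Suc i) 0) :: real"]
  unfolding pair_count_Suc_shift by auto

lemma card_le_if_separated:
  assumes S: "S \<subseteq> {..<n}" and g: "g \<ge> 1" and sep: "\<forall>a\<in>S. \<forall>b\<in>S. a < b \<longrightarrow> g \<le> b - a"
  shows "real (card S) \<le> real n / real g + 1"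
proof -
  have less_div: "a div g < b div g" if "a \<in> S" "b \<in> S" "a < b" for a b
  proof -
    have "a + g \<le> b" using sep that by force
    then have "(a + g) div g \<le> b div g" by (rule div_le_mono)
    then show ?thesis using g by simp
  qed
  have "inj_on (\<lambda>a. a div g) S"
  proof (rule inj_onI)
    fix a b assume "a \<in> S" "b \<in> S" "a div g = b div g"
    then show "a = b" using less_div[of a b] less_div[of b a] by (cases a b rule: linorder_cases) auto
  qed
  moreover have "(\<lambda>a. a div g) ` S \<subseteq> {..(n - 1) div g}"
    using S by (auto intro!: div_le_mono)
  ultimately have "card S \<le> card {..(n - 1) div g}"
    by (metis card_image card_mono finite_atMost)
  then have "real (card S) \<le> real ((n - 1) div g) + 1" by simp
  also have "real ((n - 1) div g) \<le> real (n - 1) / real g" by (rule of_nat_div_le_of_nat)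
  also have "\<dots> \<le> real n / real g" using g by (intro divide_right_mono) auto
  finally show ?thesis by simp
qed

lemma finite_words_of_length: "finite {w :: bool list. length w = m}"
  using finite_lists_length_eq[of "UNIV :: bool set" m] by simp

lemma card_words_of_length: "card {w :: bool list. length w = m} = 2 ^ m"
  using card_lists_length_eq[of "UNIV :: bool set" m] by simp

lemma tendsto_squeeze_families:
  fixes f lo hi c :: "nat \<Rightarrow> real"
  assumes lo: "lo \<longlonglongrightarrow> L" and hi: "hi \<longlonglongrightarrow> L"
    and lower: "\<And>k n. n > 0 \<Longrightarrow> lo k - c k / real n \<le> f n"
    and upper: "\<And>k n. n > 0 \<Longrightarrow> f n \<le> hi k + c k / real n"
  shows "f \<longlonglongrightarrow> L"
proof (rule order_tendstoI)
  fix a assume "a < L"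
  obtain k where k: "lo k > a"
    using order_tendstoD(1)[OF lo \<open>a < L\<close>] eventually_sequentially by auto
  have "eventually (\<lambda>n. c k / real n < lo k - a) sequentially"
    using order_tendstoD(2)[OF lim_const_over_n[of "c k"]] k by simp
  moreover have "eventually (\<lambda>n. n > 0) sequentially" by (rule eventually_gt_at_top)
  ultimately show "eventually (\<lambda>n. a < f n) sequentially"
  proof eventually_elim
    case (elim n)
    then show ?case using lower[of n k] by linarith
  qed
next
  fix a assume "L < a"
  obtain k where k: "hi k < a"
    using order_tendstoD(2)[OF hi \<open>L < a\<close>] eventually_sequentially by auto
  have "eventually (\<lambda>n. c k / real n < a - hi k) sequentially"
    using order_tendstoD(2)[OF lim_const_over_n[of "c k"]] k by simp
  moreover have "eventually (\<lambda>n. n > 0) sequentially" by (rule eventually_gt_at_top)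
  ultimately show "eventually (\<lambda>n. f n < a) sequentially"
  proof eventually_elim
    case (elim n)
    then show ?case using upper[of n k] by linarith
  qed
qed

lemma tendsto_perturb_div_square:
  assumes "(\<lambda>n. u n / real (Suc n) ^ 2) \<longlonglongrightarrow> P" and "\<And>n. \<bar>v n - u n\<bar> \<le> 2 * real n + 1"
  shows "(\<lambda>n. v n / real (Suc n) ^ 2) \<longlonglongrightarrow> P"
proof -
  have "(\<lambda>n. (v n - u n) / real (Suc n) ^ 2) \<longlonglongrightarrow> 0"
  proof (rule Lim_null_comparison)
    have "\<bar>v n - u n\<bar> / real (Suc n) ^ 2 \<le> 2 * real (Suc n) / real (Suc n) ^ 2" for n
      using assms(2)[of n] by (intro divide_right_mono) auto
    moreover have "2 * real (Suc n) / real (Suc n) ^ 2 = 2 / real (Suc n)" for n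
      by (simp only: power2_eq_square mult_divide_mult_cancel_right of_nat_Suc)
    ultimately show "\<forall>\<^sub>F n in sequentially. norm ((v n - u n) / real (Suc n) ^ 2) \<le> 2 / real (Suc n)"
      by (intro always_eventually allI) (metis abs_divide abs_of_nonneg real_norm_def zero_le_power2)
    show "(\<lambda>n. 2 / real (Suc n)) \<longlonglongrightarrow> 0"
      using LIMSEQ_Suc[OF lim_const_over_n[of "2::real"]] by simp
  qed
  from tendsto_add[OF this assms(1)] show ?thesis by (simp add: diff_divide_distrib)
qed

lemma sum_weighted_second_difference:
  fixes P :: "nat \<Rightarrow> real"
  shows "(\<Sum>m<N. real (m + 1) * ((P m - P (Suc m)) - (P (Suc m) - P (Suc (Suc m)))))
    = P 0 - P N - real N * (P N - P (Suc N))"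
  by (induction N) (simp_all add: algebra_simps)

text \<open>For \<open>P\<close> convex and decreasing to \<open>0\<close>, the difference \<open>P n - P (Suc n)\<close> is at most the
  average difference over \<open>[n div 2, n)\<close>, which is bounded by \<open>2 P (n div 2) / n\<close>.\<close>

lemma tendsto_mult_difference_convex:
  fixes P :: "nat \<Rightarrow> real"
  assumes lim: "P \<longlonglongrightarrow> 0" and dec: "\<And>n. P (Suc n) \<le> P n"
    and convex: "\<And>n. P (Suc n) - P (Suc (Suc n)) \<le> P n - P (Suc n)"
  shows "(\<lambda>n. real n * (P n - P (Suc n))) \<longlonglongrightarrow> 0"
proof (rule tendsto_sandwich)
  define D where "D n = P n - P (Suc n)" for n
  have "decseq P" using dec by (rule decseq_SucI)
  then have P_nonneg: "0 \<le> P n" for n using decseq_ge[OF _ lim] by blast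
  have "decseq D" unfolding D_def using convex by (rule decseq_SucI)
  have "real n * D n \<le> 2 * P (n div 2)" for n
  proof -
    have "real (card {n div 2..<n}) * D n \<le> (\<Sum>m\<in>{n div 2..<n}. D m)"
      using \<open>decseq D\<close> by (intro sum_bounded_below) (auto simp: decseq_def)
    also have "\<dots> = P (n div 2) - P n"
      unfolding D_def using sum_Suc_diff'[of "n div 2" n P] by (simp add: sum_subtractf)
    also have "\<dots> \<le> P (n div 2)" using P_nonneg by simp
    finally have "real (n - n div 2) * D n \<le> P (n div 2)" by simp
    moreover have "real n * D n \<le> 2 * real (n - n div 2) * D n"
      using dec[of n] unfolding D_def by (intro mult_right_mono) linarith+
    ultimately show ?thesis by linarith
  qed
  then show "eventually (\<lambda>n. real n * (P n - P (Suc n)) \<le> 2 * P (n div 2)) sequentially"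
    unfolding D_def by simp
  show "eventually (\<lambda>n. 0 \<le> real n * (P n - P (Suc n))) sequentially"
    using dec by simp
  have "filterlim (\<lambda>n. n div 2) sequentially sequentially"
    unfolding filterlim_at_top eventually_sequentially by (metis div_le_mono div_mult_self1_is_m zero_less_numeral)
  then show "(\<lambda>n. 2 * P (n div 2)) \<longlonglongrightarrow> 0"
    using tendsto_mult_right_zero filterlim_compose[OF lim] by blast
qed simp

lemma sums_weighted_second_difference:
  fixes P :: "nat \<Rightarrow> real"
  assumes "P \<longlonglongrightarrow> 0" and "\<And>n. P (Suc n) \<le> P n"
    and "\<And>n. P (Suc n) - P (Suc (Suc n)) \<le> P n - P (Suc n)"
  shows "(\<lambda>m. real (m + 1) * ((P m - P (Suc m)) - (P (Suc m) - P (Suc (Suc m))))) sums P 0"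
proof -
  have "(\<lambda>N. P 0 - P N - real N * (P N - P (Suc N))) \<longlonglongrightarrow> P 0 - 0 - 0"
    by (intro tendsto_diff tendsto_const assms tendsto_mult_difference_convex)
  then show ?thesis unfolding sums_def sum_weighted_second_difference by simp
qed

lemma funpow_shift: "(shift ^^ n) y = (\<lambda>t. y (t + n))"
  by (induction n) (auto simp: shift_def)

lemma rho_le_half_iff: "rho y z \<le> 1 / 2 \<longleftrightarrow> y 0 = z 0"
proof (cases "y = z")
  case False
  then have ex: "\<exists>i. y i \<noteq> z i" by auto
  define k where "k = (LEAST i. y i \<noteq> z i)"
  have rho_k: "rho y z = (1 / 2) ^ k"
    using False by (simp add: rho_def k_def)
  have differ_k: "y k \<noteq> z k"
    unfolding k_def by (rule LeastI_ex[OF ex])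
  show ?thesis
  proof (cases "y 0 = z 0")
    case True
    then have "k \<ge> 1" using differ_k by (cases k) auto
    then have "(1 / 2 :: real) ^ k \<le> (1 / 2) ^ 1" by (intro power_decreasing) auto
    then show ?thesis using True rho_k by simp
  next
    case False
    then have "k = 0" unfolding k_def by (rule Least_eq_0)
    then show ?thesis using False rho_k by simp
  qed
qed (simp add: rho_def)

section \<open>The fixed point\<close>

locale constant_length_fixpoint =
  fixes \<zeta> :: "bool \<Rightarrow> bool list" and q :: nat and x :: "nat \<Rightarrow> bool"
  assumes q: "q \<ge> 2" and const: "constant_length \<zeta> q"
    and prim: "primitive_subst \<zeta>" and aper: "aperiodic_subst \<zeta>"
    and fixpt: "\<forall>k i. i < length (subst_iter \<zeta> k False) \<longrightarrow> x i = subst_iter \<zeta> k False ! i"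
begin

abbreviation block :: "nat \<Rightarrow> bool \<Rightarrow> bool list" where
  "block k b \<equiv> subst_iter \<zeta> k b"

lemma length_block: "length (block k b) = q ^ k"
  using length_subst_iter[OF const] .

lemma q_pos: "q > 0"
  using q by simp

lemma less_q_power: "n < q ^ n"
proof -
  have "n < 2 ^ n" by (rule less_exp)
  also have "(2::nat) ^ n \<le> q ^ n" using q by (simp add: power_mono)
  finally show ?thesis .
qed

lemma less_Suc_div_mult_q_power: "n < Suc (n div q ^ k) * q ^ k"
proof -
  have "n mod q ^ k < q ^ k" using q_pos by simp
  then show ?thesis using div_mult_mod_eq[of n "q ^ k"] by simp
qed

lemma tendsto_const_divide_q_power: "(\<lambda>k. c / real q ^ k) \<longlonglongrightarrow> 0"
proof -
  have "(\<lambda>k. c * (1 / real q) ^ k) \<longlonglongrightarrow> c * 0"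
    using q by (intro tendsto_mult tendsto_const LIMSEQ_power_zero) auto
  then show ?thesis by (simp add: power_one_over divide_inverse power_inverse)
qed

lemma x_block:
  assumes "r < q ^ k"
  shows "x (q ^ k * i + r) = block k (x i) ! r"
proof -
  have i: "i < q ^ i" by (rule less_q_power)
  have "q ^ k * i + r < q ^ k * (i + 1)" using assms by simp
  also have "\<dots> \<le> q ^ k * q ^ i" using i by (intro mult_le_mono2) simp
  finally have lt: "q ^ k * i + r < q ^ (i + k)" by (simp add: power_add mult.commute)
  have "x (q ^ k * i + r) = block (i + k) False ! (q ^ k * i + r)"
    using fixpt lt by (simp add: length_block)
  also have "\<dots> = block k (block i False ! i) ! r"
    unfolding subst_iter_add by (rule nth_concat_map_const_length) (use assms i in \<open>auto simp: length_block\<close>)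
  also have "block i False ! i = x i" using fixpt i by (simp add: length_block)
  finally show ?thesis .
qed

definition prim_exp :: nat where
  "prim_exp = (SOME k. k \<ge> 1 \<and> (\<forall>a b. b \<in> set (block k a)))"

lemma prim_exp: "prim_exp \<ge> 1" "b \<in> set (block prim_exp a)"
proof -
  have "\<exists>k. k \<ge> 1 \<and> (\<forall>a b. b \<in> set (block k a))"
    using prim by (simp add: primitive_subst_def)
  then have "prim_exp \<ge> 1 \<and> (\<forall>a b. b \<in> set (block prim_exp a))"
    unfolding prim_exp_def by (rule someI_ex)
  then show "prim_exp \<ge> 1" "b \<in> set (block prim_exp a)" by auto
qed

lemma letter_in_block: "\<exists>t < q ^ prim_exp. x (q ^ prim_exp * i + t) = b"
proof -
  obtain t where "t < length (block prim_exp (x i))" "block prim_exp (x i) ! t = b"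
    using prim_exp(2) by (auto simp: in_set_conv_nth)
  then show ?thesis using x_block[of t prim_exp i] by (auto simp: length_block)
qed

lemma letter_occurs: "\<exists>i. x i = b"
  using letter_in_block[of 0 b] by auto

definition matches :: "nat \<Rightarrow> nat \<Rightarrow> nat \<Rightarrow> bool" where
  "matches m i j \<longleftrightarrow> (\<forall>t<m. x (i + t) = x (j + t))"

lemma matches_mono: "m' \<le> m \<Longrightarrow> matches m i j \<Longrightarrow> matches m' i j"
  by (auto simp: matches_def)

lemma uniformly_recurrent:
  "\<exists>R. \<forall>s. \<exists>j. s \<le> j \<and> j + m \<le> s + R \<and> matches m j i"
proof -
  define k where "k = i + m"
  have km: "i + m < q ^ k" unfolding k_def by (rule less_q_power)
  define E where "E = q ^ k * q ^ prim_exp"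
  have E_pos: "E > 0" using q by (simp add: E_def)
  have "\<exists>j. s \<le> j \<and> j + m \<le> s + 2 * E \<and> matches m j i" for s
  proof -
    define c0 where "c0 = s div E + 1"
    obtain t where t: "t < q ^ prim_exp" "x (q ^ prim_exp * c0 + t) = x 0"
      using letter_in_block by blast
    define c where "c = q ^ prim_exp * c0 + t"
    \<comment> \<open>the level-\<open>k\<close> block at \<open>c\<close> repeats the initial block, which contains the word at \<open>i\<close>\<close>
    have copy: "x (q ^ k * c + r) = x r" if "r < q ^ k" for r
      using x_block[OF that, of c] x_block[OF that, of 0] t(2) by (simp add: c_def)
    define j where "j = q ^ k * c + i"
    have below: "E * (s div E) \<le> s" by simp
    have above: "s < E * (s div E) + E"
      using E_pos by (metis add.commute div_mult_mod_eq mod_less_divisor nat_add_left_cancel_less mult.commute)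
    have "s \<le> E * c0" using above by (simp add: c0_def algebra_simps)
    also have "E * c0 \<le> q ^ k * c" unfolding E_def c_def by (simp add: algebra_simps)
    finally have "s \<le> j" unfolding j_def by simp
    moreover have "j + m \<le> s + 2 * E"
    proof -
      have "c + 1 \<le> q ^ prim_exp * (c0 + 1)" using t(1) by (simp add: c_def algebra_simps)
      then have "q ^ k * (c + 1) \<le> q ^ k * (q ^ prim_exp * (c0 + 1))" by (rule mult_le_mono2)
      then have "q ^ k * c + q ^ k \<le> E * (c0 + 1)" by (simp add: E_def algebra_simps)
      moreover have "E * (c0 + 1) \<le> s + 2 * E" using below by (simp add: c0_def algebra_simps)
      ultimately show ?thesis using km unfolding j_def by linarith
    qed
    moreover have "matches m j i"
      using copy km unfolding j_def matches_def by (auto simp: add.assoc)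
    ultimately show ?thesis by blast
  qed
  then show ?thesis by blast
qed

lemma language_word_occurs:
  assumes "w \<in> subst_language \<zeta>"
  shows "\<exists>j. \<forall>t<length w. x (j + t) = w ! t"
proof -
  obtain k a u v where split: "block k a = u @ w @ v"
    using assms by (auto simp: subst_language_def)
  have len: "length u + length w \<le> q ^ k"
    using arg_cong[OF split, of length] by (simp add: length_block)
  obtain i where i: "x i = a" using letter_occurs by blast
  have "x (q ^ k * i + length u + t) = w ! t" if "t < length w" for t
    using x_block[of "length u + t" k i] that len i split by (simp add: nth_append add.assoc)
  then show ?thesis by blast
qed

text \<open>Were some period \<open>p\<close> to hold on arbitrarily long stretches of \<open>x\<close>, uniform recurrence
  would carry it onto every word of the language, making some point of the subshift periodic.\<close>

lemma no_local_period:
  assumes "p \<ge> 1"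
  shows "\<exists>N. \<forall>i. \<not> matches N i (i + p)"
proof (rule ccontr)
  assume "\<not> ?thesis"
  then have periodic_stretch: "\<forall>N. \<exists>i. matches N i (i + p)" by blast
  obtain y where y: "y \<in> subshift \<zeta>" "\<not> shift_periodic y"
    using aper by (auto simp: aperiodic_subst_def)
  have "y (s + p) = y s" for s
  proof -
    define w where "w = factor y s (p + 1)"
    have "w \<in> subst_language \<zeta>" using y(1) by (simp add: subshift_def w_def)
    moreover have "length w = p + 1" by (simp add: w_def factor_def)
    ultimately obtain j where j: "\<forall>t<p + 1. x (j + t) = y (s + t)"
      using language_word_occurs by (fastforce simp: w_def factor_def simp del: upt_Suc)
    obtain R where R: "\<forall>s. \<exists>j'. s \<le> j' \<and> j' + (p + 1) \<le> s + R \<and> matches (p + 1) j' j"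
      using uniformly_recurrent by blast
    obtain i where i: "matches R i (i + p)" using periodic_stretch by blast
    obtain j' where j': "i \<le> j'" "j' + (p + 1) \<le> i + R" "matches (p + 1) j' j"
      using R by blast
    have "j' - i < R" using j'(1,2) by simp
    then have "x j' = x (j' + p)"
      using i j'(1) unfolding matches_def by (metis add.assoc add.commute le_add_diff_inverse)
    moreover have "x j' = x j" "x (j' + p) = x (j + p)"
      using j'(3) unfolding matches_def by (metis add_0_right zero_less_Suc Suc_eq_plus1, simp)
    moreover have "x j = y s" "x (j + p) = y (s + p)"
      using j[rule_format, of 0] j[rule_format, of p] by simp_all
    ultimately show ?thesis by simp
  qed
  then have "(shift ^^ p) y = y" by (auto simp: funpow_shift)
  then show False using y(2) assms by (auto simp: shift_periodic_def)
qed

lemma matches_far_apart: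
  assumes "g \<ge> 1"
  shows "\<exists>N0. \<forall>N\<ge>N0. \<forall>i j. i < j \<longrightarrow> matches N i j \<longrightarrow> g \<le> j - i"
proof -
  obtain Np where Np: "\<And>p i. p \<ge> 1 \<Longrightarrow> \<not> matches (Np p) i (i + p)"
    using no_local_period by metis
  define N0 where "N0 = (\<Sum>p\<in>{1..<g}. Np p)"
  have "g \<le> j - i" if "N \<ge> N0" "i < j" "matches N i j" for N i j
  proof (rule ccontr)
    assume "\<not> g \<le> j - i"
    then have p: "j - i \<in> {1..<g}" using that(2) by auto
    then have "Np (j - i) \<le> N0" unfolding N0_def by (intro member_le_sum) auto
    then have "matches (Np (j - i)) i j" using that(1,3) by (auto intro: matches_mono)
    then show False using Np[of "j - i" i] p that(2) by simp
  qed
  then show ?thesis by blast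
qed

section \<open>Frequencies of words\<close>

context
  fixes w :: "bool list"
begin

definition occurs_at :: "nat \<Rightarrow> bool" where
  "occurs_at i \<longleftrightarrow> factor x i (length w) = w"

definition block_count :: "nat \<Rightarrow> nat \<Rightarrow> nat" where
  "block_count k i = window_count occurs_at (length w) (q ^ k * i) (q ^ k)"

definition max_count :: "nat \<Rightarrow> nat" where
  "max_count k = Max (range (block_count k))"

definition min_count :: "nat \<Rightarrow> nat" where
  "min_count k = Min (range (block_count k))"

lemma block_count_le: "block_count k i \<le> q ^ k"
  unfolding block_count_def by (rule window_count_le)

lemma block_count_cong:
  assumes "x i = x i'"
  shows "block_count k i = block_count k i'"
proof -
  have "occurs_at (q ^ k * i + r) = occurs_at (q ^ k * i' + r)" if "r + length w \<le> q ^ k" for r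
  proof -
    have "x (q ^ k * i + r + t) = x (q ^ k * i' + r + t)" if "t < length w" for t
      using x_block[of "r + t" k i] x_block[of "r + t" k i'] assms \<open>r + length w \<le> q ^ k\<close> that
      by (simp add: add.assoc)
    then have "factor x (q ^ k * i + r) (length w) = factor x (q ^ k * i' + r) (length w)"
      unfolding factor_def by (intro map_cong) auto
    then show ?thesis unfolding occurs_at_def by simp
  qed
  then show ?thesis
    unfolding block_count_def window_count_def by (intro arg_cong[where f = card] Collect_cong) auto
qed

lemma finite_range_block_count: "finite (range (block_count k))"
  using block_count_le by (intro finite_nat_set_iff_bounded_le[THEN iffD2]) auto

lemma min_count_le_block_count: "min_count k \<le> block_count k i"
  unfolding min_count_def using finite_range_block_count by (intro Min_le) auto

lemma block_count_le_max_count: "block_count k i \<le> max_count k"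
  unfolding max_count_def using finite_range_block_count by (intro Max_ge) auto

lemma max_count_attained: "\<exists>i. max_count k = block_count k i"
  using Max_in[OF finite_range_block_count] by (auto simp: max_count_def)

lemma min_count_attained: "\<exists>i. min_count k = block_count k i"
  using Min_in[OF finite_range_block_count] by (auto simp: min_count_def)

lemma max_count_le: "max_count k \<le> q ^ k"
  using max_count_attained block_count_le by metis

text \<open>By primitivity, the \<open>q\<^sup>p\<close> level-\<open>k\<close> blocks making up a level-\<open>(k + p)\<close> block,
  \<open>p = prim_exp\<close>, include blocks of both letters, hence every possible count.\<close>

lemma count_attained_in_block:
  assumes "c \<in> range (block_count k)"
  shows "\<exists>s < q ^ prim_exp. block_count k (q ^ prim_exp * i + s) = c"
proof -
  obtain i0 where c: "c = block_count k i0" using assms by blast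
  obtain s where s: "s < q ^ prim_exp" "x (q ^ prim_exp * i + s) = x i0"
    using letter_in_block by blast
  then show ?thesis using block_count_cong[OF s(2)] c by blast
qed

lemma block_count_add:
  "(\<Sum>s<q ^ j. block_count k (q ^ j * i + s)) \<le> block_count (k + j) i"
  "block_count (k + j) i \<le> (\<Sum>s<q ^ j. block_count k (q ^ j * i + s)) + q ^ j * length w"
proof -
  have sub: "window_count occurs_at (length w) (q ^ (k + j) * i + s * q ^ k) (q ^ k)
      = block_count k (q ^ j * i + s)" for s
    unfolding block_count_def by (simp add: power_add algebra_simps)
  have whole: "block_count (k + j) i = window_count occurs_at (length w) (q ^ (k + j) * i) (q ^ j * q ^ k)"
    unfolding block_count_def by (simp add: power_add mult.commute)
  show "(\<Sum>s<q ^ j. block_count k (q ^ j * i + s)) \<le> block_count (k + j) i"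
    using window_count_blocks(1)[where P = occurs_at and m = "length w"
        and a = "q ^ (k + j) * i" and L = "q ^ k" and t = "q ^ j"]
    unfolding whole sub by simp
  show "block_count (k + j) i \<le> (\<Sum>s<q ^ j. block_count k (q ^ j * i + s)) + q ^ j * length w"
    using window_count_blocks(2)[where P = occurs_at and m = "length w"
        and a = "q ^ (k + j) * i" and L = "q ^ k" and t = "q ^ j"]
    unfolding whole sub by simp
qed

lemma max_count_Suc_le: "max_count (Suc k) \<le> q * max_count k + q * length w"
proof -
  obtain i where i: "max_count (Suc k) = block_count (Suc k) i"
    using max_count_attained by blast
  have "(\<Sum>s<q ^ 1. block_count k (q ^ 1 * i + s)) \<le> of_nat (card {..<q ^ 1}) * max_count k"
    by (rule sum_bounded_above) (rule block_count_le_max_count)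
  then show ?thesis using block_count_add(2)[of k 1 i] i by simp
qed

lemma min_count_Suc_ge: "q * min_count k \<le> min_count (Suc k)"
proof -
  obtain i where i: "min_count (Suc k) = block_count (Suc k) i"
    using min_count_attained by blast
  have "of_nat (card {..<q ^ 1}) * min_count k \<le> (\<Sum>s<q ^ 1. block_count k (q ^ 1 * i + s))"
    by (rule sum_bounded_below) (rule min_count_le_block_count)
  then show ?thesis using block_count_add(1)[of k 1 i] i by simp
qed

lemma max_count_prim_exp_le:
  "max_count (k + prim_exp) \<le> (q ^ prim_exp - 1) * max_count k + min_count k + q ^ prim_exp * length w"
proof -
  obtain i where i: "max_count (k + prim_exp) = block_count (k + prim_exp) i"
    using max_count_attained by blast
  obtain s0 where s0: "s0 < q ^ prim_exp" "block_count k (q ^ prim_exp * i + s0) = min_count k"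
    using count_attained_in_block min_count_attained by (metis rangeI)
  have "(\<Sum>s<q ^ prim_exp. block_count k (q ^ prim_exp * i + s))
      \<le> block_count k (q ^ prim_exp * i + s0) + (card {..<q ^ prim_exp} - 1) * max_count k"
    by (rule sum_le_one_term_plus_bound) (use s0 block_count_le_max_count in auto)
  then show ?thesis using block_count_add(2)[of k prim_exp i] i s0 by simp
qed

lemma min_count_prim_exp_ge:
  "(q ^ prim_exp - 1) * min_count k + max_count k \<le> min_count (k + prim_exp)"
proof -
  obtain i where i: "min_count (k + prim_exp) = block_count (k + prim_exp) i"
    using min_count_attained by blast
  obtain s0 where s0: "s0 < q ^ prim_exp" "block_count k (q ^ prim_exp * i + s0) = max_count k"
    using count_attained_in_block max_count_attained by (metis rangeI)
  have "block_count k (q ^ prim_exp * i + s0) + (card {..<q ^ prim_exp} - 1) * min_count k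
      \<le> (\<Sum>s<q ^ prim_exp. block_count k (q ^ prim_exp * i + s))"
    by (rule one_term_plus_bound_le_sum) (use s0 min_count_le_block_count in auto)
  then show ?thesis using block_count_add(1)[of k prim_exp i] i s0 by simp
qed

definition upper_freq :: "nat \<Rightarrow> real" where
  "upper_freq k = real (max_count k) / real q ^ k"

definition lower_freq :: "nat \<Rightarrow> real" where
  "lower_freq k = real (min_count k) / real q ^ k"

lemma lower_freq_nonneg: "0 \<le> lower_freq k"
  unfolding lower_freq_def by simp

lemma lower_le_upper_freq: "lower_freq k \<le> upper_freq k"
  unfolding lower_freq_def upper_freq_def
  using min_count_le_block_count[of k 0] block_count_le_max_count[of k 0]
  by (intro divide_right_mono) auto

lemma upper_freq_le_1: "upper_freq k \<le> 1"
proof -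
  have "real (max_count k) \<le> real q ^ k" using max_count_le[of k] by (metis of_nat_le_iff of_nat_power)
  then show ?thesis unfolding upper_freq_def using q_pos by simp
qed

lemma upper_freq_Suc_le: "upper_freq (Suc k) \<le> upper_freq k + real (length w) / real q ^ k"
proof -
  have "real (max_count (Suc k)) \<le> real q * real (max_count k) + real q * real (length w)"
    using max_count_Suc_le[of k] by (metis of_nat_add of_nat_le_iff of_nat_mult)
  then show ?thesis unfolding upper_freq_def using q_pos by (simp add: field_simps)
qed

lemma lower_freq_Suc_ge: "lower_freq k \<le> lower_freq (Suc k)"
proof -
  have "real q * real (min_count k) \<le> real (min_count (Suc k))"
    using min_count_Suc_ge[of k] by (metis of_nat_le_iff of_nat_mult)
  then show ?thesis unfolding lower_freq_def using q_pos by (simp add: field_simps)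
qed

lemma freq_gap_contraction:
  "upper_freq (k + prim_exp) - lower_freq (k + prim_exp)
     \<le> (1 - 2 / real q ^ prim_exp) * (upper_freq k - lower_freq k) + real (length w) / real q ^ k"
proof -
  define Q where "Q = real q ^ prim_exp"
  have Q1: "Q \<ge> 1" unfolding Q_def using q by simp
  have qk: "real q ^ k > 0" using q_pos by simp
  have Q_minus_1: "real (q ^ prim_exp - 1) = Q - 1"
    unfolding Q_def using q_pos by (simp add: of_nat_diff)
  have "real (max_count (k + prim_exp)) \<le> real ((q ^ prim_exp - 1) * max_count k + min_count k + q ^ prim_exp * length w)"
    using max_count_prim_exp_le[of k] by (simp only: of_nat_le_iff)
  then have up: "real (max_count (k + prim_exp)) \<le> (Q - 1) * max_count k + min_count k + Q * length w"
    using Q_minus_1 unfolding Q_def by simp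
  have "real ((q ^ prim_exp - 1) * min_count k + max_count k) \<le> real (min_count (k + prim_exp))"
    using min_count_prim_exp_ge[of k] by (simp only: of_nat_le_iff)
  then have down: "(Q - 1) * min_count k + max_count k \<le> real (min_count (k + prim_exp))"
    using Q_minus_1 unfolding Q_def by simp
  have "upper_freq (k + prim_exp) - lower_freq (k + prim_exp)
      = (real (max_count (k + prim_exp)) - real (min_count (k + prim_exp))) / (real q ^ k * Q)"
    unfolding upper_freq_def lower_freq_def Q_def by (simp add: power_add diff_divide_distrib)
  also have "\<dots> \<le> ((Q - 2) * (real (max_count k) - real (min_count k)) + Q * length w) / (real q ^ k * Q)"
    using up down qk Q1 by (intro divide_right_mono) (auto simp: algebra_simps)
  also have "\<dots> = (1 - 2 / Q) * (upper_freq k - lower_freq k) + real (length w) / real q ^ k"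
    unfolding upper_freq_def lower_freq_def using qk Q1 by (simp add: field_simps)
  finally show ?thesis unfolding Q_def .
qed

lemma convergent_lower_freq: "convergent lower_freq"
proof -
  have "incseq lower_freq" by (rule incseq_SucI) (rule lower_freq_Suc_ge)
  moreover have "\<forall>k. lower_freq k \<le> 1"
    using lower_le_upper_freq upper_freq_le_1 by (meson order_trans)
  ultimately show ?thesis using incseq_convergent convergentI by metis
qed

text \<open>The error terms \<open>|w| / q\<^sup>j\<close>, \<open>j \<ge> k\<close>, sum to at most \<open>2|w| / q\<^sup>k\<close>, so adding this
  bound makes the upper frequencies decrease.\<close>

lemma convergent_upper_freq: "convergent upper_freq"
proof -
  define m where "m = real (length w)"
  define A where "A k = upper_freq k + 2 * m / real q ^ k" for k
  have "decseq A"
  proof (rule decseq_SucI)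
    fix k
    have "2 * m \<le> real q * m" using q by (intro mult_right_mono) (auto simp: m_def)
    then have "2 * m / real q \<le> m" using q_pos by (simp add: divide_le_eq mult.commute)
    then have "2 * m / real q / real q ^ k \<le> m / real q ^ k" by (rule divide_right_mono) simp
    then have "2 * m / real q ^ Suc k \<le> m / real q ^ k" by (simp add: divide_divide_eq_left)
    then show "A (Suc k) \<le> A k" unfolding A_def using upper_freq_Suc_le[of k] by (simp add: m_def)
  qed
  moreover have "0 \<le> A k" for k
    using lower_freq_nonneg[of k] lower_le_upper_freq[of k] unfolding A_def m_def by simp
  ultimately obtain L where "A \<longlonglongrightarrow> L" using decseq_convergent by (metis order.refl)
  then have "(\<lambda>k. A k - 2 * m / real q ^ k) \<longlonglongrightarrow> L - 0"
    by (intro tendsto_diff tendsto_const_divide_q_power)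
  then show ?thesis unfolding A_def by (auto intro: convergentI)
qed

lemma lim_upper_freq_eq_lim_lower_freq: "lim upper_freq = lim lower_freq"
proof -
  define Q where "Q = real q ^ prim_exp"
  define G where "G = lim upper_freq - lim lower_freq"
  have up: "upper_freq \<longlonglongrightarrow> lim upper_freq" and low: "lower_freq \<longlonglongrightarrow> lim lower_freq"
    using convergent_upper_freq convergent_lower_freq by (simp_all add: convergent_LIMSEQ_iff)
  have "real q ^ 1 \<le> Q"
    unfolding Q_def by (rule power_increasing) (use q prim_exp(1) in auto)
  then have "Q \<ge> 2" using q by simp
  have "(\<lambda>k. upper_freq (k + prim_exp) - lower_freq (k + prim_exp)) \<longlonglongrightarrow> G"
    unfolding G_def by (intro tendsto_diff LIMSEQ_ignore_initial_segment up low)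
  moreover have "(\<lambda>k. (1 - 2 / Q) * (upper_freq k - lower_freq k) + real (length w) / real q ^ k)
      \<longlonglongrightarrow> (1 - 2 / Q) * G + 0"
    unfolding G_def by (intro tendsto_add tendsto_mult tendsto_const tendsto_diff up low tendsto_const_divide_q_power)
  ultimately have "G \<le> (1 - 2 / Q) * G + 0"
    using freq_gap_contraction by (intro LIMSEQ_le) (auto simp: Q_def)
  then have "G * (2 / Q) \<le> 0" by (simp add: algebra_simps)
  moreover have "2 / Q > 0" using \<open>Q \<ge> 2\<close> by simp
  ultimately have "G \<le> 0" by (meson mult_pos_pos not_le)
  moreover have "0 \<le> G"
    unfolding G_def using up low lower_le_upper_freq by (simp add: LIMSEQ_le)
  ultimately show ?thesis unfolding G_def by simp
qed

definition occurrence_count :: "nat \<Rightarrow> nat" where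
  "occurrence_count n = card {i. i < n \<and> occurs_at i}"

lemma occurrence_count_ge_blocks: "n div q ^ k * min_count k \<le> occurrence_count n"
proof -
  define t where "t = n div q ^ k"
  have "t * min_count k \<le> (\<Sum>j<t. block_count k j)"
    using sum_mono[of "{..<t}" "\<lambda>_. min_count k" "block_count k"] min_count_le_block_count by simp
  also have "\<dots> = (\<Sum>j<t. window_count occurs_at (length w) (0 + j * q ^ k) (q ^ k))"
    unfolding block_count_def by (simp add: mult.commute)
  also have "\<dots> \<le> window_count occurs_at (length w) 0 (t * q ^ k)" by (rule window_count_blocks(1))
  also have "\<dots> \<le> window_count occurs_at (length w) 0 n" by (rule window_count_mono) (simp add: t_def)
  also have "\<dots> \<le> occurrence_count n" unfolding occurrence_count_def by (rule window_count_card_bounds(1))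
  finally show ?thesis unfolding t_def .
qed

lemma occurrence_count_le_blocks:
  "occurrence_count n \<le> (n div q ^ k + 1) * (max_count k + length w) + length w"
proof -
  define t where "t = n div q ^ k"
  have "n \<le> Suc t * q ^ k"
    using less_Suc_div_mult_q_power[of n k] unfolding t_def by simp
  then have "window_count occurs_at (length w) 0 n \<le> window_count occurs_at (length w) 0 (Suc t * q ^ k)"
    by (rule window_count_mono)
  also have "\<dots> \<le> (\<Sum>j<Suc t. window_count occurs_at (length w) (0 + j * q ^ k) (q ^ k)) + Suc t * length w"
    by (rule window_count_blocks(2))
  also have "(\<Sum>j<Suc t. window_count occurs_at (length w) (0 + j * q ^ k) (q ^ k)) = (\<Sum>j<Suc t. block_count k j)"
    unfolding block_count_def by (simp add: mult.commute)
  also have "\<dots> \<le> Suc t * max_count k"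
    using sum_mono[of "{..<Suc t}" "block_count k" "\<lambda>_. max_count k"] block_count_le_max_count by simp
  finally have "window_count occurs_at (length w) 0 n \<le> Suc t * (max_count k + length w)"
    by (simp add: algebra_simps)
  moreover have "occurrence_count n \<le> window_count occurs_at (length w) 0 n + length w"
    unfolding occurrence_count_def by (rule window_count_card_bounds(2))
  ultimately show ?thesis unfolding t_def by simp
qed

lemma occurrence_freq_ge:
  assumes "n > 0"
  shows "lower_freq k - (real q ^ k + 2 * length w) / real n \<le> real (occurrence_count n) / real n"
proof -
  define B where "B = real q ^ k"
  define t where "t = n div q ^ k"
  have B: "B > 0" unfolding B_def using q_pos by simp
  have "n < (t + 1) * q ^ k"
    using less_Suc_div_mult_q_power[of n k] unfolding t_def by simp
  then have "real n < real ((t + 1) * q ^ k)" by (simp only: of_nat_less_iff)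
  then have "real n - B \<le> real t * B" unfolding B_def by (simp add: algebra_simps)
  then have "(real n - B) * lower_freq k \<le> real t * B * lower_freq k"
    using lower_freq_nonneg by (rule mult_right_mono)
  also have "\<dots> = real (t * min_count k)" using q_pos unfolding lower_freq_def B_def by simp
  also have "\<dots> \<le> real (occurrence_count n)"
    unfolding t_def of_nat_le_iff by (rule occurrence_count_ge_blocks)
  finally have "real n * lower_freq k - B \<le> real (occurrence_count n)"
    using lower_le_upper_freq[of k] upper_freq_le_1[of k] B by (simp add: algebra_simps) (smt (verit) mult_left_le)
  then have "(real n * lower_freq k - B) / real n \<le> real (occurrence_count n) / real n"
    by (rule divide_right_mono) simp
  moreover have "(real n * lower_freq k - B) / real n = lower_freq k - B / real n"
    using assms by (simp add: field_simps)
  ultimately have "lower_freq k - B / real n \<le> real (occurrence_count n) / real n" by simp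
  moreover have "B / real n \<le> (B + 2 * length w) / real n" by (simp add: divide_right_mono)
  ultimately show ?thesis unfolding B_def by linarith
qed

lemma occurrence_freq_le:
  assumes "n > 0"
  shows "real (occurrence_count n) / real n
    \<le> (upper_freq k + length w / real q ^ k) + (real q ^ k + 2 * length w) / real n"
proof -
  define B where "B = real q ^ k"
  define m where "m = real (length w)"
  define t where "t = n div q ^ k"
  have B: "B > 0" unfolding B_def using q_pos by simp
  have m: "m \<ge> 0" unfolding m_def by simp
  have "t * q ^ k \<le> n" unfolding t_def by (rule div_times_less_eq_dividend)
  then have "real (t * q ^ k) \<le> real n" by (simp only: of_nat_le_iff)
  then have tB: "real t * B \<le> real n" unfolding B_def by simp
  have "real (occurrence_count n) \<le> real ((t + 1) * (max_count k + length w) + length w)"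
    using occurrence_count_le_blocks[of n k] unfolding t_def by (simp only: of_nat_le_iff)
  also have "\<dots> = (real t + 1) * (real (max_count k) + m) + m" unfolding m_def by (simp add: algebra_simps)
  also have "\<dots> = ((real t + 1) * B) * (upper_freq k + m / B) + m"
    using B unfolding upper_freq_def B_def by (simp add: field_simps)
  also have "\<dots> \<le> (real n + B) * (upper_freq k + m / B) + m"
    using tB B m lower_freq_nonneg[of k] lower_le_upper_freq[of k]
    by (intro add_right_mono mult_right_mono) (auto simp: algebra_simps)
  also have "\<dots> = real n * (upper_freq k + m / B) + (B * upper_freq k + 2 * m)"
    using B by (simp add: field_simps)
  also have "\<dots> \<le> real n * (upper_freq k + m / B) + (B + 2 * m)"
    using upper_freq_le_1[of k] B by simp
  finally show ?thesis
    using assms unfolding B_def m_def by (simp add: field_simps)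
qed

lemma occurrence_frequency:
  "(\<lambda>n. real (occurrence_count n) / real n) \<longlonglongrightarrow> lim lower_freq"
proof (rule tendsto_squeeze_families)
  show "lower_freq \<longlonglongrightarrow> lim lower_freq"
    using convergent_lower_freq by (simp add: convergent_LIMSEQ_iff)
  have "(\<lambda>k. upper_freq k + length w / real q ^ k) \<longlonglongrightarrow> lim upper_freq + 0"
    using convergent_upper_freq by (intro tendsto_add tendsto_const_divide_q_power) (simp add: convergent_LIMSEQ_iff)
  then show "(\<lambda>k. upper_freq k + length w / real q ^ k) \<longlonglongrightarrow> lim lower_freq"
    by (simp add: lim_upper_freq_eq_lim_lower_freq)
qed (fact occurrence_freq_ge occurrence_freq_le)+

end

section \<open>Density of matching pairs\<close>

lemma factor_eq_iff_matches: "factor x i m = factor x j m \<longleftrightarrow> matches m i j"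
  unfolding factor_def matches_def by (auto simp: map_eq_conv)

lemma card_factor_eq_occurrence_count:
  assumes "length w = m"
  shows "card {i. i < n \<and> factor x i m = w} = occurrence_count w n"
  using assms by (simp add: occurrence_count_def occurs_at_def)

lemma pair_count_matches_eq_sum_squares:
  "pair_count (matches m) n = (\<Sum>w | length w = m. real (occurrence_count w n) ^ 2)"
proof -
  have row: "(\<Sum>j<n. of_bool (matches m i j)) = real (occurrence_count (factor x i m) n)" for i
  proof -
    have "{..<n} \<inter> {j. matches m i j} = {j. j < n \<and> occurs_at (factor x i m) j}"
      by (auto simp: occurs_at_def factor_eq_iff_matches matches_def factor_def)
    then show ?thesis by (simp add: occurrence_count_def)
  qed
  have "pair_count (matches m) n = (\<Sum>i<n. real (occurrence_count (factor x i m) n))"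
    unfolding pair_count_def row ..
  also have "\<dots> = (\<Sum>w | length w = m. real (card {i \<in> {..<n}. factor x i m = w}) * real (occurrence_count w n))"
    by (rule sum_fun_comp) (auto simp: finite_words_of_length factor_def)
  also have "\<dots> = (\<Sum>w | length w = m. real (occurrence_count w n) ^ 2)"
    by (rule sum.cong) (simp_all add: card_factor_eq_occurrence_count power2_eq_square)
  finally show ?thesis .
qed

lemma sum_occurrence_count: "(\<Sum>w | length w = m. real (occurrence_count w n)) = real n"
proof -
  have "real n = (\<Sum>i<n. (\<lambda>w. 1 :: real) (factor x i m))" by simp
  also have "\<dots> = (\<Sum>w | length w = m. real (card {i \<in> {..<n}. factor x i m = w}) * 1)"
    by (rule sum_fun_comp) (auto simp: finite_words_of_length factor_def)
  also have "\<dots> = (\<Sum>w | length w = m. real (occurrence_count w n))"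
    by (rule sum.cong) (simp_all add: card_factor_eq_occurrence_count)
  finally show ?thesis by simp
qed

definition match_density :: "nat \<Rightarrow> real" where
  "match_density m = lim (\<lambda>n. pair_count (matches m) n / real n ^ 2)"

lemma tendsto_match_density: "(\<lambda>n. pair_count (matches m) n / real n ^ 2) \<longlonglongrightarrow> match_density m"
proof -
  have "(\<lambda>n. \<Sum>w | length w = m. (real (occurrence_count w n) / real n) ^ 2)
      \<longlonglongrightarrow> (\<Sum>w | length w = m. lim (lower_freq w) ^ 2)"
    by (intro tendsto_sum tendsto_power occurrence_frequency)
  then have "convergent (\<lambda>n. pair_count (matches m) n / real n ^ 2)"
    unfolding pair_count_matches_eq_sum_squares
    by (auto intro: convergentI simp: sum_divide_distrib power_divide)
  then show ?thesis unfolding match_density_def by (simp add: convergent_LIMSEQ_iff)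
qed

lemma match_density_nonneg: "0 \<le> match_density m"
  by (rule LIMSEQ_le_const[OF tendsto_match_density]) (auto intro!: divide_nonneg_nonneg pair_count_nonneg)

lemma match_density_Suc_le: "match_density (Suc m) \<le> match_density m"
  by (rule LIMSEQ_le[OF tendsto_match_density tendsto_match_density])
    (auto intro!: divide_right_mono pair_count_mono simp: matches_def)

lemma match_density_pos: "match_density m \<ge> 1 / 2 ^ m"
proof (rule LIMSEQ_le_const[OF tendsto_match_density], intro exI allI impI)
  fix n :: nat assume "n \<ge> 1"
  have "real n ^ 2 \<le> (\<Sum>w | length w = m. real (occurrence_count w n) ^ 2) * 2 ^ m"
    using sum_squared_le_sum_of_squares[of "\<lambda>w. real (occurrence_count w n)" "{w. length w = m}"]
    by (simp add: sum_occurrence_count card_words_of_length)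
  then show "1 / 2 ^ m \<le> pair_count (matches m) n / real n ^ 2"
    using \<open>n \<ge> 1\<close> by (simp add: pair_count_matches_eq_sum_squares field_simps)
qed

lemma match_density_le_inverse:
  assumes g: "g \<ge> 1"
  shows "\<exists>N0. \<forall>N\<ge>N0. match_density N \<le> 1 / real g"
proof -
  obtain N0 where N0: "\<forall>N\<ge>N0. \<forall>i j. i < j \<longrightarrow> matches N i j \<longrightarrow> g \<le> j - i"
    using matches_far_apart[OF g] by blast
  have "match_density N \<le> 1 / real g" if N: "N \<ge> N0" for N
  proof -
    have "pair_count (matches N) n / real n ^ 2 \<le> 1 / real g + 1 / real n" if n: "n \<ge> 1" for n
    proof -
      have "(\<Sum>j<n. of_bool (matches N i j)) \<le> real n / real g + 1" for i
      proof -
        have "(\<Sum>j<n. of_bool (matches N i j)) = real (card ({..<n} \<inter> {j. matches N i j}))" by simp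
        also have "\<dots> \<le> real n / real g + 1"
          using N0 N g by (intro card_le_if_separated) (auto simp: matches_def)
        finally show ?thesis .
      qed
      then have "pair_count (matches N) n \<le> real n * (real n / real g + 1)"
        unfolding pair_count_def using sum_mono[of "{..<n}"] by (metis (no_types, lifting) card_lessThan sum_bounded_above)
      then show ?thesis using n by (simp add: field_simps power2_eq_square)
    qed
    moreover have "(\<lambda>n. 1 / real g + 1 / real n) \<longlonglongrightarrow> 1 / real g + 0"
      by (intro tendsto_add tendsto_const lim_const_over_n)
    ultimately show ?thesis
      by (intro LIMSEQ_le[OF tendsto_match_density]) auto
  qed
  then show ?thesis by blast
qed

lemma match_density_tendsto_0: "match_density \<longlonglongrightarrow> 0"
proof (rule order_tendstoI)
  fix r :: real assume "0 < r"
  then obtain g :: nat where "g \<noteq> 0" "inverse (real g) < r"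
    using real_arch_inverse[of r] by auto
  then have g: "g \<ge> 1" "1 / real g < r" by (auto simp: inverse_eq_divide)
  then obtain N0 where "\<forall>N\<ge>N0. match_density N \<le> 1 / real g"
    using match_density_le_inverse by blast
  then show "eventually (\<lambda>N. match_density N < r) sequentially"
    using g(2) unfolding eventually_sequentially by force
qed (use match_density_nonneg in \<open>auto intro: less_le_trans always_eventually\<close>)

section \<open>Inner lines and the correlation sum\<close>

lemma tendsto_pair_count_matches_Suc_square:
  "(\<lambda>n. pair_count (matches m) n / real (Suc n) ^ 2) \<longlonglongrightarrow> match_density m"
  "(\<lambda>n. pair_count (\<lambda>i j. matches m (Suc i) (Suc j)) n / real (Suc n) ^ 2) \<longlonglongrightarrow> match_density m"
proof -
  have Suc: "(\<lambda>n. pair_count (matches m) (Suc n) / real (Suc n) ^ 2) \<longlonglongrightarrow> match_density m"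
    using LIMSEQ_Suc[OF tendsto_match_density] by simp
  have "\<bar>pair_count (matches m) n - pair_count (matches m) (Suc n)\<bar> \<le> 2 * real n + 1" for n
    using pair_count_Suc_bounds[of "matches m" n] unfolding abs_le_iff by (intro conjI) linarith+
  then show "(\<lambda>n. pair_count (matches m) n / real (Suc n) ^ 2) \<longlonglongrightarrow> match_density m"
    by (rule tendsto_perturb_div_square[OF Suc])
  have "\<bar>pair_count (\<lambda>i j. matches m (Suc i) (Suc j)) n - pair_count (matches m) (Suc n)\<bar> \<le> 2 * real n + 1" for n
    using pair_count_Suc_shift_bounds[of "matches m" n] unfolding abs_le_iff by (intro conjI) linarith+
  then show "(\<lambda>n. pair_count (\<lambda>i j. matches m (Suc i) (Suc j)) n / real (Suc n) ^ 2) \<longlonglongrightarrow> match_density m"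
    by (rule tendsto_perturb_div_square[OF Suc])
qed

lemma inner_line_start_indicator:
  "(of_bool ((Suc i, Suc j) \<in> inner_line_starts x l) :: real) =
     of_bool (matches l (Suc i) (Suc j)) - of_bool (matches (Suc l) i j)
     - of_bool (matches (Suc l) (Suc i) (Suc j)) + of_bool (matches (Suc (Suc l)) i j)"
proof -
  have extend_front: "matches (Suc m) i j \<longleftrightarrow> x i = x j \<and> matches m (Suc i) (Suc j)" for m i j
    unfolding matches_def by (auto simp: less_Suc_eq_0_disj)
  have extend_back: "matches (Suc m) i j \<longleftrightarrow> matches m i j \<and> x (i + m) = x (j + m)" for m i j
    unfolding matches_def by (auto simp: less_Suc_eq)
  have "(Suc i, Suc j) \<in> inner_line_starts x l \<longleftrightarrow>
      x i \<noteq> x j \<and> matches l (Suc i) (Suc j) \<and> x (Suc i + l) \<noteq> x (Suc j + l)"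
    unfolding inner_line_starts_def matches_def by auto
  then show ?thesis unfolding extend_front[of "Suc l" i j] extend_back[of l "Suc i" "Suc j"] extend_front[of l i j]
    by (cases "x i = x j"; cases "matches l (Suc i) (Suc j)"; cases "x (Suc i + l) = x (Suc j + l)") simp_all
qed

lemma density_inner_line_starts:
  "(\<lambda>n. real (card (inner_line_starts x l \<inter> {0..<n} \<times> {0..<n})) / real n ^ 2)
     \<longlonglongrightarrow> (match_density l - match_density (Suc l)) - (match_density (Suc l) - match_density (Suc (Suc l)))"
proof -
  let ?K = "\<lambda>i j. (i, j) \<in> inner_line_starts x l"
  let ?S = "\<lambda>R i j. R (Suc i) (Suc j)"
  have "pair_count ?K (Suc n) = pair_count (?S (matches l)) n - pair_count (matches (Suc l)) n
      - pair_count (?S (matches (Suc l))) n + pair_count (matches (Suc (Suc l))) n" for n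
  proof -
    have "pair_count ?K (Suc n) = pair_count (?S ?K) n"
      using pair_count_Suc_shift[of ?K n] by (simp add: inner_line_starts_def)
    then show ?thesis
      unfolding pair_count_def inner_line_start_indicator by (simp only: sum.distrib sum_subtractf)
  qed
  then have "(\<lambda>n. pair_count ?K (Suc n) / real (Suc n) ^ 2) =
      (\<lambda>n. pair_count (?S (matches l)) n / real (Suc n) ^ 2 - pair_count (matches (Suc l)) n / real (Suc n) ^ 2
        - pair_count (?S (matches (Suc l))) n / real (Suc n) ^ 2 + pair_count (matches (Suc (Suc l))) n / real (Suc n) ^ 2)"
    by (simp add: add_divide_distrib diff_divide_distrib)
  also have "\<dots> \<longlonglongrightarrow> match_density l - match_density (Suc l) - match_density (Suc l) + match_density (Suc (Suc l))"
    by (intro tendsto_add tendsto_diff tendsto_pair_count_matches_Suc_square)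
  finally show ?thesis
    unfolding card_Int_square_eq_pair_count by (simp add: LIMSEQ_imp_Suc algebra_simps)
qed

lemma match_density_convex:
  "match_density (Suc l) - match_density (Suc (Suc l)) \<le> match_density l - match_density (Suc l)"
  using LIMSEQ_le_const[OF density_inner_line_starts, of 0 l] by (auto intro!: divide_nonneg_nonneg)

lemma correlation_sum_eq_pair_count:
  assumes "L \<ge> 1"
  shows "corr_sum L x n (1 / 2) = pair_count (matches L) n / real n ^ 2"
proof -
  have "Max ((\<lambda>k. rho ((shift ^^ (i + k)) x) ((shift ^^ (j + k)) x)) ` {0..<L}) \<le> 1 / 2
      \<longleftrightarrow> matches L i j" for i j
  proof -
    have "(\<forall>k\<in>{0..<L}. rho ((shift ^^ (i + k)) x) ((shift ^^ (j + k)) x) \<le> 1 / 2) \<longleftrightarrow> matches L i j"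
      unfolding rho_le_half_iff funpow_shift matches_def by auto
    then show ?thesis using assms by (subst Max_le_iff) auto
  qed
  then have "{(i, j) \<in> {0..<n} \<times> {0..<n}.
        Max ((\<lambda>k. rho ((shift ^^ (i + k)) x) ((shift ^^ (j + k)) x)) ` {0..<L}) \<le> 1 / 2}
      = {(i, j). matches L i j} \<inter> {0..<n} \<times> {0..<n}"
    by auto
  then show ?thesis
    unfolding corr_sum_def using card_Int_square_eq_pair_count[of "{(i, j). matches L i j}" n] by simp
qed

end

theorem proposition3p8:
  fixes \<zeta> :: "bool \<Rightarrow> bool list" and q :: nat and x :: "nat \<Rightarrow> bool" and L :: nat
  assumes q: "q \<ge> 2" and const: "constant_length \<zeta> q"
    and prim: "primitive_subst \<zeta>" and aper: "aperiodic_subst \<zeta>"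
    and start0: "hd (\<zeta> False) = False"
    and fixpt: "\<forall>k i. i < length (subst_iter \<zeta> k False) \<longrightarrow> x i = subst_iter \<zeta> k False ! i"
    and Lpos: "L \<ge> 1"
  shows "\<exists>S. (\<lambda>n. corr_sum L x n (1/2)) \<longlonglongrightarrow> S
           \<and> (\<lambda>m. real (m + 1) * density (inner_line_starts x (m + L))) sums S
           \<and> S > 0"
proof -
  \<comment> \<open>\<open>start0\<close> only ensures that the fixed point exists; \<open>fixpt\<close> already describes it.\<close>
  interpret constant_length_fixpoint \<zeta> q x
    using q const prim aper fixpt by unfold_locales
  define P where "P n = match_density (n + L)" for n
  have "(\<lambda>n. corr_sum L x n (1/2)) \<longlonglongrightarrow> P 0"
    unfolding correlation_sum_eq_pair_count[OF Lpos] P_def by (simp add: tendsto_match_density)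
  moreover have "density (inner_line_starts x (m + L)) = (P m - P (Suc m)) - (P (Suc m) - P (Suc (Suc m)))" for m
    unfolding density_def limI[OF density_inner_line_starts] P_def by simp
  moreover have "(\<lambda>m. real (m + 1) * ((P m - P (Suc m)) - (P (Suc m) - P (Suc (Suc m))))) sums P 0"
    unfolding P_def using match_density_Suc_le match_density_convex
    by (intro sums_weighted_second_difference LIMSEQ_ignore_initial_segment match_density_tendsto_0) simp_all
  moreover have "P 0 > 0"
    using match_density_pos[of L] unfolding P_def
    by (simp add: order.strict_trans2[OF divide_pos_pos[of 1 "2 ^ L"]])
  ultimately show ?thesis by auto
qed

end
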